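(* Let $q\in\Bbbk^\times$. (1) The linear map $\phi:D(q)\to D(q^{-1})$ with $\phi(e_1)=e_1$, $\phi(e_2)=e_2$, $\phi(a)=qa+(q-1)c$, $\phi(b)=qb$, $\phi(c)=c$, $\phi(d)=(q-1)b+d$ extends to an isomorphism. (2) The linear map $\psi:D(q)\to D(q)$ with $\psi(e_1)=e_2$, $\psi(e_2)=e_1$, $\psi(a)=qd$, $\psi(b)=a+c$, $\psi(c)=b$, $\psi(d)=a$ extends to an isomorphism.
   Context: $\Bbbk$ is an algebraically closed field of characteristic zero. Paths are written left to right. Let $Q$ be the quiver with vertices $e_1,e_2$, arrows $a,c:e_1\to e_2$ and $b,d:e_2\to e_1$; $D(q)=\Bbbk Q/(ab-(a+c)d,\ ba-q\,dc)$. *)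

theory Defs
  imports "HOL-Algebra.QuotRing"
begin

text \<open>Paths are written left to right and represented as a start vertex together with the
  list of arrows traversed (trivial path at v = (v, [])).\<close>

datatype vert = V1 | V2
datatype arr = A | B | C | D

fun src :: "arr \<Rightarrow> vert" where
  "src A = V1" | "src C = V1" | "src B = V2" | "src D = V2"

fun tgt :: "arr \<Rightarrow> vert" where
  "tgt A = V2" | "tgt C = V2" | "tgt B = V1" | "tgt D = V1"

type_synonym path = "vert \<times> arr list"

fun valid_from :: "vert \<Rightarrow> arr list \<Rightarrow> bool" where
  "valid_from v [] = True"
| "valid_from v (x # xs) = (src x = v \<and> valid_from (tgt x) xs)"

fun end_from :: "vert \<Rightarrow> arr list \<Rightarrow> vert" where
  "end_from v [] = v"
| "end_from v (x # xs) = end_from (tgt x) xs"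

definition valid_path :: "path \<Rightarrow> bool" where
  "valid_path p = valid_from (fst p) (snd p)"

definition path_end :: "path \<Rightarrow> vert" where
  "path_end p = end_from (fst p) (snd p)"

definition pa_carrier :: "(path \<Rightarrow> 'k::field) set" where
  "pa_carrier = {f. finite {p. f p \<noteq> 0} \<and> (\<forall>p. f p \<noteq> 0 \<longrightarrow> valid_path p)}"

definition pa_add :: "(path \<Rightarrow> 'k::field) \<Rightarrow> (path \<Rightarrow> 'k) \<Rightarrow> (path \<Rightarrow> 'k)" where
  "pa_add f g = (\<lambda>p. f p + g p)"

definition pa_smul :: "'k::field \<Rightarrow> (path \<Rightarrow> 'k) \<Rightarrow> (path \<Rightarrow> 'k)" where
  "pa_smul l f = (\<lambda>p. l * f p)"

definition pa_mult :: "(path \<Rightarrow> 'k::field) \<Rightarrow> (path \<Rightarrow> 'k) \<Rightarrow> (path \<Rightarrow> 'k)" where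
  "pa_mult f g = (\<lambda>p. \<Sum>(p1, p2) \<in> {(p1, p2). valid_path p1 \<and> valid_path p2 \<and>
        path_end p1 = fst p2 \<and> (fst p1, snd p1 @ snd p2) = p}. f p1 * g p2)"

text \<open>Scalar l in kQ, i.e. l * (e1 + e2).\<close>
definition pa_scal :: "'k::field \<Rightarrow> (path \<Rightarrow> 'k)" where
  "pa_scal l = (\<lambda>p. if snd p = [] then l else 0)"

definition vtx :: "vert \<Rightarrow> (path \<Rightarrow> 'k::field)" where
  "vtx v = (\<lambda>p. if p = (v, []) then 1 else 0)"

definition arw :: "arr \<Rightarrow> (path \<Rightarrow> 'k::field)" where
  "arw x = (\<lambda>p. if p = (src x, [x]) then 1 else 0)"

definition PA :: "(path \<Rightarrow> 'k::field) ring" where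
  "PA = \<lparr>carrier = pa_carrier, mult = pa_mult, one = pa_scal 1,
         zero = (\<lambda>_. 0), add = pa_add\<rparr>"

definition rels :: "'k::field \<Rightarrow> (path \<Rightarrow> 'k) set" where
  "rels q = {(\<lambda>p. pa_mult (arw A) (arw B) p - pa_mult (pa_add (arw A) (arw C)) (arw D) p),
             (\<lambda>p. pa_mult (arw B) (arw A) p - q * pa_mult (arw D) (arw C) p)}"

definition Dideal :: "'k::field \<Rightarrow> (path \<Rightarrow> 'k) set" where
  "Dideal q = genideal PA (rels q)"

definition Dalg :: "'k::field \<Rightarrow> (path \<Rightarrow> 'k) set ring" where
  "Dalg q = PA Quot (Dideal q)"

definition cls :: "'k::field \<Rightarrow> (path \<Rightarrow> 'k) \<Rightarrow> (path \<Rightarrow> 'k) set" where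
  "cls q f = Dideal q +>\<^bsub>PA\<^esub> f"

definition alg_closed_field :: "'k::field itself \<Rightarrow> bool" where
  "alg_closed_field _ = (\<forall>n::nat. \<forall>c::nat \<Rightarrow> 'k. n \<ge> 1 \<longrightarrow>
      (\<exists>x. x ^ n + (\<Sum>i<n. c i * x ^ i) = 0))"

end

theory Submission
  imports Defs
begin

text \<open>Both maps come from linear substitutions of the arrows that are compatible with a
  permutation of the vertices (the identity for \<open>\<phi>\<close>, the swap of \<open>e\<^sub>1\<close> and \<open>e\<^sub>2\<close> for \<open>\<psi>\<close>).
  Sending a path to the product of the images of its arrows turns such a substitution into an
  endomorphism of the path algebra \<open>kQ\<close>, and the substitution by the inverse matrix is its inverse.
  A computation on paths of length two shows that each defining relation is sent to a nonzero
  multiple of a defining relation of the target: under \<open>\<phi>\<close>, \<open>ab - (a+c)d\<close> goes to \<open>q\<close> times itself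
  and \<open>ba - q dc\<close> to \<open>q\<^sup>2 (ba - q\<^sup>-\<^sup>1 dc)\<close>; under \<open>\<psi>\<close> the two relations are exchanged up to the
  factors \<open>-1\<close> and \<open>-q\<close>. The same holds for the inverse substitutions, so the automorphism of
  \<open>kQ\<close> maps one ideal of relations onto the other and descends to the quotients.\<close>

section \<open>Quotients by generated ideals\<close>

lemma ring_hom_genideal_subset:
  assumes R: "ring R" and R': "ring R'" and F: "F \<in> ring_hom R R'" and J: "ideal J R'"
    and S: "S \<subseteq> carrier R" and FS: "\<And>s. s \<in> S \<Longrightarrow> F s \<in> J"
  shows "genideal R S \<subseteq> {x \<in> carrier R. F x \<in> J}"
proof (rule ring.genideal_minimal[OF R])
  show "ideal {x \<in> carrier R. F x \<in> J} R"
    by (rule ring_hom_ring.ideal_vimage[OF ring_hom_ringI2[OF R R' F] J])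
qed (use S FS in auto)

lemma genideal_Quot_iso:
  fixes R :: "('a, 'm) ring_scheme" (structure)
  assumes R: "ring R"
    and S: "S \<subseteq> carrier R" and T: "T \<subseteq> carrier R"
    and F: "F \<in> ring_hom R R" and G: "G \<in> ring_hom R R"
    and GF: "\<And>x. x \<in> carrier R \<Longrightarrow> G (F x) = x"
    and FG: "\<And>x. x \<in> carrier R \<Longrightarrow> F (G x) = x"
    and FS: "\<And>s. s \<in> S \<Longrightarrow> F s \<in> genideal R T"
    and GT: "\<And>t. t \<in> T \<Longrightarrow> G t \<in> genideal R S"
  shows "\<exists>h. h \<in> ring_iso (R Quot genideal R S) (R Quot genideal R T)
           \<and> (\<forall>x\<in>carrier R. h (genideal R S +> x) = genideal R T +> F x)"
proof -
  interpret ring R by fact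
  let ?I = "genideal R S" and ?J = "genideal R T" and ?h = "\<lambda>x. genideal R T +> F x"
  have I: "ideal ?I R" and J: "ideal ?J R" using genideal_ideal S T by auto
  have h: "?h \<in> ring_hom R (R Quot ?J)"
    using ring_hom_trans[OF F ideal.rcos_ring_hom[OF J]] by (simp add: comp_def)
  have hR: "ring_hom_ring R (R Quot ?J) ?h"
    by (rule ring_hom_ringI2[OF R ideal.quotient_is_ring[OF J] h])
  have F_closed: "F x \<in> carrier R" and G_closed: "G x \<in> carrier R" if "x \<in> carrier R" for x
    using F G that by (simp_all add: ring_hom_closed)
  have F_in_J: "F x \<in> ?J \<longleftrightarrow> x \<in> ?I" if x: "x \<in> carrier R" for x
    using ring_hom_genideal_subset[OF R R F J S FS] ring_hom_genideal_subset[OF R R G I T GT]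
      GF[OF x] by auto
  have "a_kernel R (R Quot ?J) ?h = {x \<in> carrier R. ?J +> F x = ?J}"
    unfolding a_kernel_def' FactRing_def by simp
  also have "\<dots> = ?I"
    using F_in_J F_closed ideal.rcos_const_imp_mem[OF J] a_rcos_zero[OF J] ideal.Icarr[OF I] by blast
  finally have ker: "a_kernel R (R Quot ?J) ?h = ?I" .
  have "carrier (R Quot ?J) \<subseteq> ?h ` carrier R"
  proof
    fix X assume "X \<in> carrier (R Quot ?J)"
    then obtain y where y: "y \<in> carrier R" "X = ?J +> y"
      unfolding FactRing_def A_RCOSETS_def' by auto
    then have "X = ?h (G y)" using FG by simp
    then show "X \<in> ?h ` carrier R" using G_closed y by blast
  qed
  then have surj: "?h ` carrier R = carrier (R Quot ?J)"
    using ring_hom_closed[OF h] by blast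
  show ?thesis
    using ring_hom_ring.FactRing_iso_set[OF hR surj] ring_hom_ring.the_elem_simp[OF hR]
    unfolding ker by blast
qed

section \<open>The path algebra is a ring\<close>

lemma valid_from_append [simp]:
  "valid_from v (xs @ ys) = (valid_from v xs \<and> valid_from (end_from v xs) ys)"
  by (induction xs arbitrary: v) auto

lemma end_from_append [simp]: "end_from v (xs @ ys) = end_from (end_from v xs) ys"
  by (induction xs arbitrary: v) auto

definition factor_sum :: "(path \<Rightarrow> 'k::field) \<Rightarrow> (path \<Rightarrow> 'k) \<Rightarrow> vert \<Rightarrow> arr list \<Rightarrow> 'k" where
  "factor_sum f g v xs =
     (\<Sum>k\<le>length xs. f (v, take k xs) * g (end_from v (take k xs), drop k xs))"

lemma pa_mult_factors:
  "{(p1, p2). valid_path p1 \<and> valid_path p2 \<and> path_end p1 = fst p2 \<and> (fst p1, snd p1 @ snd p2) = (v, xs)}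
   = (if valid_from v xs
      then (\<lambda>k. ((v, take k xs), (end_from v (take k xs), drop k xs))) ` {..length xs} else {})"
proof (cases "valid_from v xs")
  case True
  show ?thesis
  proof (simp only: True if_True, intro equalityI subsetI)
    fix pp assume "pp \<in> {(p1, p2). valid_path p1 \<and> valid_path p2 \<and> path_end p1 = fst p2
                               \<and> (fst p1, snd p1 @ snd p2) = (v, xs)}"
    then obtain ys zs where "pp = ((v, ys), (end_from v ys, zs))" and "ys @ zs = xs"
      by (cases pp) (auto simp: path_end_def)
    then show "pp \<in> (\<lambda>k. ((v, take k xs), (end_from v (take k xs), drop k xs))) ` {..length xs}"
      by (intro image_eqI[where x="length ys"]) auto
  next
    fix pp assume "pp \<in> (\<lambda>k. ((v, take k xs), (end_from v (take k xs), drop k xs))) ` {..length xs}"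
    then obtain k where pp: "pp = ((v, take k xs), (end_from v (take k xs), drop k xs))" by auto
    have "valid_from v (take k xs @ drop k xs)" using True by simp
    then show "pp \<in> {(p1, p2). valid_path p1 \<and> valid_path p2 \<and> path_end p1 = fst p2
                               \<and> (fst p1, snd p1 @ snd p2) = (v, xs)}"
      by (simp only: valid_from_append) (simp add: pp valid_path_def path_end_def)
  qed
next
  case False
  then show ?thesis
    by (auto simp: valid_path_def path_end_def)
qed

lemma pa_mult_apply:
  "pa_mult f g (v, xs) = (if valid_from v xs then factor_sum f g v xs else 0)"
proof -
  have "inj_on (\<lambda>k. ((v, take k xs), (end_from v (take k xs), drop k xs))) {..length xs}"
    by (rule inj_onI) (auto dest!: arg_cong[where f=length] simp: min_def)
  then show ?thesis
    unfolding pa_mult_def pa_mult_factors by (simp add: sum.reindex factor_sum_def)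
qed

lemma PA_simps [simp]:
  "carrier PA = pa_carrier" "mult PA = pa_mult" "add PA = pa_add"
  "one PA = pa_scal 1" "zero PA = (\<lambda>_. 0)"
  by (simp_all add: PA_def)

lemma pa_carrier_invalid: "f \<in> pa_carrier \<Longrightarrow> \<not> valid_from v xs \<Longrightarrow> f (v, xs) = 0"
  unfolding pa_carrier_def valid_path_def by force

lemma pa_carrier_supportI:
  assumes f: "f \<in> pa_carrier" and h: "h \<in> pa_carrier"
    and supp: "\<And>p. g p \<noteq> 0 \<Longrightarrow> f p \<noteq> 0 \<or> h p \<noteq> 0"
  shows "g \<in> pa_carrier"
proof -
  have "{p. g p \<noteq> 0} \<subseteq> {p. f p \<noteq> 0} \<union> {p. h p \<noteq> 0}" using supp by blast
  moreover have "finite ({p. f p \<noteq> 0} \<union> {p. h p \<noteq> 0})" using f h by (simp add: pa_carrier_def)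
  ultimately have "finite {p. g p \<noteq> 0}" by (rule finite_subset)
  with f h supp show ?thesis unfolding pa_carrier_def by blast
qed

lemma pa_add_closed: "f \<in> pa_carrier \<Longrightarrow> g \<in> pa_carrier \<Longrightarrow> pa_add f g \<in> pa_carrier"
  by (erule pa_carrier_supportI) (auto simp: pa_add_def)

lemma pa_diff_closed: "f \<in> pa_carrier \<Longrightarrow> g \<in> pa_carrier \<Longrightarrow> (\<lambda>p. f p - g p) \<in> pa_carrier"
  by (erule pa_carrier_supportI) auto

lemma pa_smul_closed: "f \<in> pa_carrier \<Longrightarrow> pa_smul c f \<in> pa_carrier"
  by (rule pa_carrier_supportI) (auto simp: pa_smul_def)

lemma pa_carrier_finite_validI:
  assumes "finite P" "\<And>p. p \<in> P \<Longrightarrow> valid_path p" "\<And>p. f p \<noteq> 0 \<Longrightarrow> p \<in> P"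
  shows "f \<in> pa_carrier"
proof -
  have "{p. f p \<noteq> 0} \<subseteq> P" using assms(3) by blast
  with assms show ?thesis unfolding pa_carrier_def using finite_subset by blast
qed

lemma pa_scal_closed: "pa_scal l \<in> pa_carrier"
proof (rule pa_carrier_finite_validI[of "{(V1, []), (V2, [])}"])
  show "p \<in> {(V1, []), (V2, [])}" if "pa_scal l p \<noteq> 0" for p
    using that by (cases p; cases "fst p") (auto simp: pa_scal_def split: if_splits)
qed (auto simp: valid_path_def)

lemma vtx_closed: "vtx v \<in> pa_carrier"
  by (rule pa_carrier_finite_validI[of "{(v, [])}"])
    (auto simp: vtx_def valid_path_def split: if_splits)

lemma arw_closed: "arw x \<in> pa_carrier"
  by (rule pa_carrier_finite_validI[of "{(src x, [x])}"])
    (auto simp: arw_def valid_path_def split: if_splits)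

lemma pa_mult_apply_carrier:
  assumes f: "f \<in> pa_carrier" and g: "g \<in> pa_carrier"
  shows "pa_mult f g (v, xs) = factor_sum f g v xs"
proof (cases "valid_from v xs")
  case False
  have term_zero: "f (v, take k xs) * g (end_from v (take k xs), drop k xs) = 0" for k
  proof -
    have "\<not> valid_from v (take k xs @ drop k xs)" using False by simp
    then have "\<not> valid_from v (take k xs) \<or> \<not> valid_from (end_from v (take k xs)) (drop k xs)"
      by (simp del: append_take_drop_id)
    then show ?thesis
      using pa_carrier_invalid[OF f] pa_carrier_invalid[OF g] by auto
  qed
  have "factor_sum f g v xs = 0"
    unfolding factor_sum_def by (rule sum.neutral) (use term_zero in blast)
  then show ?thesis using False by (simp add: pa_mult_apply)
qed (simp add: pa_mult_apply)

lemma pa_mult_closed: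
  assumes f: "f \<in> pa_carrier" and g: "g \<in> pa_carrier"
  shows "pa_mult f g \<in> pa_carrier"
proof -
  let ?concat = "\<lambda>(p1, p2). (fst p1, snd p1 @ snd p2)"
  have "{p. pa_mult f g p \<noteq> 0} \<subseteq> ?concat ` ({p. f p \<noteq> 0} \<times> {p. g p \<noteq> 0})"
  proof
    fix p assume "p \<in> {p. pa_mult f g p \<noteq> 0}"
    then obtain v xs where p: "p = (v, xs)" and "factor_sum f g v xs \<noteq> 0"
      using pa_mult_apply_carrier[OF f g] by (cases p) auto
    then obtain k where "f (v, take k xs) * g (end_from v (take k xs), drop k xs) \<noteq> 0"
      unfolding factor_sum_def using sum.not_neutral_contains_not_neutral by blast
    then show "p \<in> ?concat ` ({p. f p \<noteq> 0} \<times> {p. g p \<noteq> 0})"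
      by (intro image_eqI[where x="((v, take k xs), (end_from v (take k xs), drop k xs))"])
        (auto simp: p)
  qed
  moreover have "finite (?concat ` ({p. f p \<noteq> 0} \<times> {p. g p \<noteq> 0}))"
    using f g by (simp add: pa_carrier_def)
  ultimately have "finite {p. pa_mult f g p \<noteq> 0}" by (rule finite_subset)
  moreover have "valid_path p" if "pa_mult f g p \<noteq> 0" for p
    using that by (cases p) (auto simp: pa_mult_apply valid_path_def split: if_splits)
  ultimately show ?thesis by (simp add: pa_carrier_def)
qed

lemma sum_atMost_triangle:
  fixes a :: "nat \<Rightarrow> nat \<Rightarrow> 'a::comm_monoid_add"
  shows "(\<Sum>k\<le>n. \<Sum>j\<le>k. a j k) = (\<Sum>j\<le>n. \<Sum>i\<le>n - j. a j (j + i))"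
proof (induction n)
  case (Suc n)
  have "(\<Sum>i\<le>Suc n - j. a j (j + i)) = (\<Sum>i\<le>n - j. a j (j + i)) + a j (Suc n)" if "j \<le> n" for j
    using that by (simp add: Suc_diff_le)
  then show ?case using Suc by (simp add: sum.distrib add.assoc)
qed simp

lemma factor_sum_take:
  "k \<le> length xs \<Longrightarrow> factor_sum f g v (take k xs)
     = (\<Sum>j\<le>k. f (v, take j xs) * g (end_from v (take j xs), drop j (take k xs)))"
  unfolding factor_sum_def by (intro sum.cong) (auto simp: min_def take_take)

lemma factor_sum_drop:
  "factor_sum g h (end_from v (take j xs)) (drop j xs)
     = (\<Sum>i\<le>length xs - j. g (end_from v (take j xs), drop j (take (j + i) xs))
                            * h (end_from v (take (j + i) xs), drop (j + i) xs))"
proof -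
  have "drop j (take (j + i) xs) = take i (drop j xs)" for i
    by (simp add: drop_take)
  moreover have "take (j + i) xs = take j xs @ take i (drop j xs)" for i
    by (rule take_add)
  moreover have "drop (j + i) xs = drop i (drop j xs)" for i
    by (simp add: add.commute)
  ultimately show ?thesis
    unfolding factor_sum_def by simp
qed

lemma pa_mult_assoc:
  assumes f: "f \<in> pa_carrier" and g: "g \<in> pa_carrier" and h: "h \<in> pa_carrier"
  shows "pa_mult (pa_mult f g) h = pa_mult f (pa_mult g h)"
proof (rule ext)
  fix p :: path
  obtain v xs where p: "p = (v, xs)" by (cases p)
  let ?n = "length xs"
  let ?t = "\<lambda>j k. f (v, take j xs) * g (end_from v (take j xs), drop j (take k xs))
                   * h (end_from v (take k xs), drop k xs)"
  have "pa_mult (pa_mult f g) h p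
      = (\<Sum>k\<le>?n. factor_sum f g v (take k xs) * h (end_from v (take k xs), drop k xs))"
    by (simp add: p pa_mult_apply_carrier f g h pa_mult_closed factor_sum_def[of "pa_mult f g"])
  also have "\<dots> = (\<Sum>k\<le>?n. \<Sum>j\<le>k. ?t j k)"
    by (rule sum.cong) (simp_all add: factor_sum_take sum_distrib_right)
  also have "\<dots> = (\<Sum>j\<le>?n. \<Sum>i\<le>?n - j. ?t j (j + i))"
    by (rule sum_atMost_triangle)
  also have "\<dots> = (\<Sum>j\<le>?n. f (v, take j xs) * factor_sum g h (end_from v (take j xs)) (drop j xs))"
    by (simp add: factor_sum_drop sum_distrib_left mult.assoc)
  also have "\<dots> = pa_mult f (pa_mult g h) p"
    by (simp add: p pa_mult_apply_carrier f g h pa_mult_closed factor_sum_def[of f])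
  finally show "pa_mult (pa_mult f g) h p = pa_mult f (pa_mult g h) p" .
qed

lemma pa_mult_add_left: "pa_mult (pa_add f g) h = pa_add (pa_mult f h) (pa_mult g h)"
  by (rule ext) (clarsimp simp: pa_mult_apply factor_sum_def pa_add_def sum.distrib distrib_right)

lemma pa_mult_add_right: "pa_mult h (pa_add f g) = pa_add (pa_mult h f) (pa_mult h g)"
  by (rule ext) (clarsimp simp: pa_mult_apply factor_sum_def pa_add_def sum.distrib distrib_left)

lemma pa_mult_scal_left:
  assumes f: "f \<in> pa_carrier" shows "pa_mult (pa_scal c) f = pa_smul c f"
proof (rule ext)
  fix p :: path
  obtain v xs where p: "p = (v, xs)" by (cases p)
  have "factor_sum (pa_scal c) f v xs = (\<Sum>k\<le>length xs. if k = 0 then c * f (v, xs) else 0)"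
    unfolding factor_sum_def by (intro sum.cong) (auto simp: pa_scal_def)
  then show "pa_mult (pa_scal c) f p = pa_smul c f p"
    by (simp add: p pa_mult_apply_carrier[OF pa_scal_closed f] pa_smul_def)
qed

lemma pa_mult_one_right:
  assumes f: "f \<in> pa_carrier" shows "pa_mult f (pa_scal 1) = f"
proof (rule ext)
  fix p :: path
  obtain v xs where p: "p = (v, xs)" by (cases p)
  have "factor_sum f (pa_scal 1) v xs = (\<Sum>k\<le>length xs. if k = length xs then f (v, xs) else 0)"
    unfolding factor_sum_def by (intro sum.cong) (auto simp: pa_scal_def)
  then show "pa_mult f (pa_scal 1) p = f p"
    by (simp add: p pa_mult_apply_carrier[OF f pa_scal_closed])
qed

lemma ring_PA: "ring PA"
proof (rule ringI)
  show "abelian_group PA"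
  proof (rule abelian_groupI, simp_all add: pa_add_closed)
    show "(\<lambda>_. 0) \<in> pa_carrier" by (simp add: pa_carrier_def)
    show "\<exists>y\<in>pa_carrier. pa_add y x = (\<lambda>_. 0)" if "x \<in> pa_carrier" for x
      using that by (intro bexI[of _ "pa_smul (-1) x"])
        (simp add: pa_add_def pa_smul_def, simp add: pa_smul_closed)
  qed (simp_all add: pa_add_def ac_simps)
  show "monoid PA"
    by (rule monoidI) (simp_all add: pa_mult_closed pa_scal_closed pa_mult_assoc
        pa_mult_scal_left pa_mult_one_right pa_smul_def)
qed (simp_all add: pa_mult_add_left pa_mult_add_right)

section \<open>Linear substitutions of arrows\<close>

lemma UNIV_vert: "(UNIV :: vert set) = {V1, V2}"
  by (auto intro: vert.exhaust)

lemma UNIV_arr: "(UNIV :: arr set) = {A, B, C, D}"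
  by (auto intro: arr.exhaust)

instance arr :: finite
  by standard (simp add: UNIV_arr)

lemma all_vert: "(\<forall>v. P v) \<longleftrightarrow> P V1 \<and> P V2"
  by (metis vert.exhaust)

lemma all_arr: "(\<forall>x. P x) \<longleftrightarrow> P A \<and> P B \<and> P C \<and> P D"
  by (metis arr.exhaust)

fun sum_words :: "nat \<Rightarrow> (arr list \<Rightarrow> 'k::comm_monoid_add) \<Rightarrow> 'k" where
  "sum_words 0 F = F []"
| "sum_words (Suc n) F = (\<Sum>x\<in>UNIV. sum_words n (\<lambda>xs. F (x # xs)))"

lemma sum_words_cong: "(\<And>xs. length xs = n \<Longrightarrow> F xs = G xs) \<Longrightarrow> sum_words n F = sum_words n G"
proof (induction n arbitrary: F G)
  case (Suc n)
  show ?case by (simp, intro sum.cong refl Suc.IH) (simp add: Suc.prems)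
qed simp

lemma sum_words_zero [simp]: "sum_words n (\<lambda>_. 0) = 0"
  by (induction n) simp_all

lemma sum_words_add: "sum_words n (\<lambda>xs. F xs + G xs) = sum_words n F + sum_words n G"
  by (induction n arbitrary: F G) (simp_all add: sum.distrib)

lemma sum_words_diff: "sum_words n (\<lambda>xs. F xs - G xs) = sum_words n F - (sum_words n G :: 'k::ab_group_add)"
  by (induction n arbitrary: F G) (simp_all add: sum_subtractf)

lemma sum_words_mult_left: "sum_words n (\<lambda>xs. c * F xs) = c * (sum_words n F :: 'k::comm_semiring_1)"
  by (induction n arbitrary: F) (simp_all add: sum_distrib_left)

lemma sum_words_mult_right: "sum_words n (\<lambda>xs. F xs * c) = (sum_words n F :: 'k::comm_semiring_1) * c"
  by (induction n arbitrary: F) (simp_all add: sum_distrib_right)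

lemma sum_words_sum: "sum_words n (\<lambda>xs. \<Sum>k\<in>K. F k xs) = (\<Sum>k\<in>K. sum_words n (F k))"
proof (induction n arbitrary: F)
  case (Suc n)
  show ?case by (simp add: Suc.IH) (rule sum.swap)
qed simp

lemma sum_words_swap:
  "sum_words m (\<lambda>xs. sum_words n (\<lambda>ys. F xs ys)) = sum_words n (\<lambda>ys. sum_words m (\<lambda>xs. F xs ys))"
proof (induction m arbitrary: F)
  case (Suc m)
  show ?case by (simp add: Suc.IH sum_words_sum)
qed simp

lemma sum_words_append: "sum_words (m + n) F = sum_words m (\<lambda>xs. sum_words n (\<lambda>ys. F (xs @ ys)))"
  by (induction m arbitrary: F) simp_all

lemma sum_words_delta:
  "sum_words n (\<lambda>xs. if xs = ws then F xs else 0) = (if length ws = n then F ws else 0)"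
proof (induction n arbitrary: ws F)
  case (Suc n)
  show ?case
  proof (cases ws)
    case (Cons w ws')
    have "sum_words n (\<lambda>xs. if x # xs = ws then F (x # xs) else 0)
          = (if x = w then (if length ws' = n then F (w # ws') else 0) else 0)" for x
      using Suc.IH[of ws' "\<lambda>xs. F (x # xs)"] by (simp add: Cons)
    then show ?thesis by (simp add: Cons)
  qed simp
qed auto

lemma sum_words_nonzero: "sum_words n F \<noteq> 0 \<Longrightarrow> \<exists>xs. length xs = n \<and> F xs \<noteq> 0"
proof (induction n arbitrary: F)
  case (Suc n)
  then obtain x where "sum_words n (\<lambda>xs. F (x # xs)) \<noteq> 0"
    using sum.not_neutral_contains_not_neutral by fastforce
  then obtain xs where "length xs = n" "F (x # xs) \<noteq> 0" using Suc.IH by blast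
  then show ?case by (intro exI[of _ "x # xs"]) simp
qed auto

fun word_coeff :: "(arr \<Rightarrow> arr \<Rightarrow> 'k::comm_semiring_1) \<Rightarrow> arr list \<Rightarrow> arr list \<Rightarrow> 'k" where
  "word_coeff M [] [] = 1"
| "word_coeff M (x # xs) (y # ys) = M x y * word_coeff M xs ys"
| "word_coeff M _ _ = 0"

lemma word_coeff_append:
  "length xs = length ys \<Longrightarrow> word_coeff M (xs @ xs') (ys @ ys') = word_coeff M xs ys * word_coeff M xs' ys'"
  by (induction xs ys rule: list_induct2) (simp_all add: mult.assoc)

lemma word_coeff_mult:
  assumes MN: "\<And>x z. (\<Sum>y\<in>UNIV. M x y * N y z) = K x z"
  shows "length xs = n \<Longrightarrow> length zs = n
           \<Longrightarrow> sum_words n (\<lambda>ys. word_coeff M xs ys * word_coeff N ys zs) = word_coeff K xs zs"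
proof (induction n arbitrary: xs zs)
  case (Suc n)
  then obtain x xs' z zs' where xs: "xs = x # xs'" and zs: "zs = z # zs'"
    and len: "length xs' = n" "length zs' = n"
    by (cases xs; cases zs) auto
  have "sum_words (Suc n) (\<lambda>ys. word_coeff M xs ys * word_coeff N ys zs)
        = (\<Sum>y\<in>UNIV. M x y * N y z * sum_words n (\<lambda>ys. word_coeff M xs' ys * word_coeff N ys zs'))"
    by (simp add: xs zs sum_words_mult_left[symmetric] mult_ac)
  also have "\<dots> = K x z * word_coeff K xs' zs'"
    by (simp add: Suc.IH[OF len] sum_distrib_right[symmetric] MN)
  finally show ?case by (simp add: xs zs)
qed simp

lemma word_coeff_delta:
  "length xs = length zs \<Longrightarrow> word_coeff (\<lambda>x z. if x = z then 1 else 0) xs zs = (if xs = zs then 1 else 0)"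
  by (induction xs zs rule: list_induct2) auto

definition arrow_compatible :: "(vert \<Rightarrow> vert) \<Rightarrow> (arr \<Rightarrow> arr \<Rightarrow> 'k::zero) \<Rightarrow> bool" where
  "arrow_compatible \<sigma> M \<longleftrightarrow> (\<forall>x y. M x y \<noteq> 0 \<longrightarrow> src y = \<sigma> (src x) \<and> tgt y = \<sigma> (tgt x))"

lemma word_coeff_compatible:
  assumes M: "arrow_compatible \<sigma> M" and nz: "word_coeff M xs ys \<noteq> 0"
  shows "end_from (\<sigma> w) ys = \<sigma> (end_from w xs) \<and> (valid_from w xs \<longrightarrow> valid_from (\<sigma> w) ys)"
  using nz
proof (induction xs arbitrary: ys w)
  case Nil
  then show ?case by (cases ys) auto
next
  case (Cons x xs)
  then obtain y ys' where ys: "ys = y # ys'" by (cases ys) auto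
  with Cons.prems have "M x y \<noteq> 0" "word_coeff M xs ys' \<noteq> 0" by auto
  then have "src y = \<sigma> (src x)" "tgt y = \<sigma> (tgt x)" using M by (auto simp: arrow_compatible_def)
  with Cons.IH[OF \<open>word_coeff M xs ys' \<noteq> 0\<close>, of "tgt x"] show ?case by (auto simp: ys)
qed

text \<open>For an involution \<open>\<sigma>\<close> of the vertices, \<open>arrow_subst \<sigma> M\<close> is the algebra map sending the
  vertex \<open>v\<close> to \<open>\<sigma> v\<close> and each arrow \<open>x\<close> to \<open>\<Sum>\<^sub>y M x y \<cdot> y\<close>: the coefficient of the path
  \<open>(v, ys)\<close> in the image of \<open>f\<close> collects the paths \<open>(\<sigma> v, xs)\<close> of the same length.\<close>

definition arrow_subst ::
  "(vert \<Rightarrow> vert) \<Rightarrow> (arr \<Rightarrow> arr \<Rightarrow> 'k::field) \<Rightarrow> (path \<Rightarrow> 'k) \<Rightarrow> (path \<Rightarrow> 'k)" where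
  "arrow_subst \<sigma> M f =
     (\<lambda>p. sum_words (length (snd p)) (\<lambda>xs. f (\<sigma> (fst p), xs) * word_coeff M xs (snd p)))"

lemma arrow_subst_apply:
  "arrow_subst \<sigma> M f (v, ys) = sum_words (length ys) (\<lambda>xs. f (\<sigma> v, xs) * word_coeff M xs ys)"
  by (simp add: arrow_subst_def)

lemma arrow_subst_add: "arrow_subst \<sigma> M (pa_add f g) = pa_add (arrow_subst \<sigma> M f) (arrow_subst \<sigma> M g)"
  by (simp add: arrow_subst_def pa_add_def distrib_right sum_words_add)

lemma arrow_subst_diff:
  "arrow_subst \<sigma> M (\<lambda>p. f p - g p) = (\<lambda>p. arrow_subst \<sigma> M f p - arrow_subst \<sigma> M g p)"
  by (simp add: arrow_subst_def left_diff_distrib sum_words_diff)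

lemma arrow_subst_scale: "arrow_subst \<sigma> M (\<lambda>p. c * f p) = (\<lambda>p. c * arrow_subst \<sigma> M f p)"
  by (simp add: arrow_subst_def sum_words_mult_left mult.assoc)

lemma arrow_subst_delta:
  "arrow_subst \<sigma> M (\<lambda>p. if p = (w, ws) then c else 0)
   = (\<lambda>p. if \<sigma> (fst p) = w \<and> length (snd p) = length ws then c * word_coeff M ws (snd p) else 0)"
proof (rule ext)
  fix p :: path
  have "arrow_subst \<sigma> M (\<lambda>p. if p = (w, ws) then c else 0) p
        = sum_words (length (snd p))
            (\<lambda>xs. if xs = ws then (if \<sigma> (fst p) = w then c * word_coeff M xs (snd p) else 0) else 0)"
    unfolding arrow_subst_def by (rule sum_words_cong) auto
  then show "arrow_subst \<sigma> M (\<lambda>p. if p = (w, ws) then c else 0) p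
      = (if \<sigma> (fst p) = w \<and> length (snd p) = length ws then c * word_coeff M ws (snd p) else 0)"
    by (simp add: sum_words_delta)
qed

lemma arrow_subst_pa_scal: "arrow_subst \<sigma> M (pa_scal l) = pa_scal l"
proof (rule ext)
  fix p :: path
  obtain v ys where p: "p = (v, ys)" by (cases p)
  show "arrow_subst \<sigma> M (pa_scal l) p = pa_scal l p"
  proof (cases ys)
    case Nil
    then show ?thesis by (simp add: p arrow_subst_apply pa_scal_def)
  next
    case (Cons y ys')
    have "arrow_subst \<sigma> M (pa_scal l) p = sum_words (length ys) (\<lambda>_. 0)"
      unfolding p arrow_subst_apply by (rule sum_words_cong) (auto simp: pa_scal_def Cons)
    then show ?thesis by (simp add: p pa_scal_def Cons)
  qed
qed

lemma arrow_subst_vtx: "(\<And>v. \<sigma> (\<sigma> v) = v) \<Longrightarrow> arrow_subst \<sigma> M (vtx w) = vtx (\<sigma> w)"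
  unfolding vtx_def arrow_subst_delta by (auto intro!: ext)

lemma arrow_subst_arw:
  fixes M :: "arr \<Rightarrow> arr \<Rightarrow> 'k::field"
  assumes M: "arrow_compatible \<sigma> M" and \<sigma>: "\<And>v. \<sigma> (\<sigma> v) = v"
  shows "arrow_subst \<sigma> M (arw x) = (\<lambda>p. \<Sum>y\<in>UNIV. M x y * arw y p)"
proof (rule ext)
  fix p :: path
  obtain v ys where p: "p = (v, ys)" by (cases p)
  have subst_eq: "arrow_subst \<sigma> M (arw x) p
      = (if \<sigma> v = src x \<and> length ys = 1 then word_coeff M [x] ys else 0)"
    unfolding arw_def arrow_subst_delta by (simp add: p)
  show "arrow_subst \<sigma> M (arw x) p = (\<Sum>y\<in>UNIV. M x y * arw y p)"
  proof (cases "length ys = 1")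
    case True
    then obtain y where ys: "ys = [y]" by (cases ys) auto
    have "M x y' * arw y' p = (if y' = y then (if v = src y then M x y else 0) else 0)" for y'
      by (auto simp: p ys arw_def)
    then have "(\<Sum>y'\<in>UNIV. M x y' * arw y' p) = (if v = src y then M x y else 0)"
      by simp
    moreover have "(\<sigma> v = src x) = (v = src y)" if "M x y \<noteq> 0"
      using M \<sigma> that unfolding arrow_compatible_def by metis
    ultimately show ?thesis
      by (auto simp: subst_eq ys)
  next
    case False
    then have "arw y p = (0::'k)" for y
      by (auto simp: p arw_def)
    with False show ?thesis
      by (simp add: subst_eq)
  qed
qed

lemma finite_paths_of_lengths: "finite L \<Longrightarrow> finite {p :: path. length (snd p) \<in> L}"
proof -
  assume L: "finite L"
  have "{p :: path. length (snd p) \<in> L} = UNIV \<times> (\<Union>n\<in>L. {xs. length xs = n})" by auto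
  moreover have "finite {xs :: arr list. length xs = n}" for n
    using finite_lists_length_eq[of "UNIV :: arr set" n] by simp
  ultimately show ?thesis using L by (simp add: UNIV_vert)
qed

lemma arrow_subst_closed:
  assumes M: "arrow_compatible \<sigma> M" and \<sigma>: "\<And>v. \<sigma> (\<sigma> v) = v" and f: "f \<in> pa_carrier"
  shows "arrow_subst \<sigma> M f \<in> pa_carrier"
proof -
  have preimage: "\<exists>xs. length xs = length ys \<and> f (\<sigma> v, xs) \<noteq> 0 \<and> word_coeff M xs ys \<noteq> 0"
    if "arrow_subst \<sigma> M f (v, ys) \<noteq> 0" for v ys
    using sum_words_nonzero[OF that[unfolded arrow_subst_apply]] by auto
  let ?L = "(\<lambda>p. length (snd p)) ` {p. f p \<noteq> 0}"
  have "{p. arrow_subst \<sigma> M f p \<noteq> 0} \<subseteq> {p. length (snd p) \<in> ?L}"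
  proof
    fix p assume "p \<in> {p. arrow_subst \<sigma> M f p \<noteq> 0}"
    then obtain v ys where p: "p = (v, ys)" "arrow_subst \<sigma> M f (v, ys) \<noteq> 0" by (cases p) auto
    then obtain xs where "length xs = length ys" "f (\<sigma> v, xs) \<noteq> 0" using preimage by blast
    then show "p \<in> {p. length (snd p) \<in> ?L}" using p by force
  qed
  moreover have "finite {p :: path. length (snd p) \<in> ?L}"
    using f by (intro finite_paths_of_lengths finite_imageI) (simp add: pa_carrier_def)
  ultimately have "finite {p. arrow_subst \<sigma> M f p \<noteq> 0}" by (rule finite_subset)
  moreover have "valid_path p" if nz: "arrow_subst \<sigma> M f p \<noteq> 0" for p
  proof -
    obtain v ys where p: "p = (v, ys)" by (cases p)
    then obtain xs where xs: "f (\<sigma> v, xs) \<noteq> 0" "word_coeff M xs ys \<noteq> 0"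
      using preimage[of v ys] nz by auto
    then have "valid_from (\<sigma> v) xs" using f by (auto simp: pa_carrier_def valid_path_def)
    with word_coeff_compatible[OF M xs(2), of "\<sigma> v"] show ?thesis by (simp add: p \<sigma> valid_path_def)
  qed
  ultimately show ?thesis by (simp add: pa_carrier_def)
qed

text \<open>Splitting the words of length \<open>length ys\<close> into a prefix of length \<open>k\<close> and the rest
  separates the two factors.\<close>

lemma arrow_subst_factor:
  assumes M: "arrow_compatible \<sigma> M" and \<sigma>: "\<And>v. \<sigma> (\<sigma> v) = v" and k: "k \<le> length ys"
  shows "sum_words (length ys) (\<lambda>xs. f (\<sigma> v, take k xs) * g (end_from (\<sigma> v) (take k xs), drop k xs)
                                    * word_coeff M xs ys)
       = arrow_subst \<sigma> M f (v, take k ys) * arrow_subst \<sigma> M g (end_from v (take k ys), drop k ys)"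
proof -
  let ?n = "length ys" and ?ys1 = "take k ys" and ?ys2 = "drop k ys"
  have n: "?n = k + (?n - k)" and len: "length ?ys1 = k" "length ?ys2 = ?n - k" using k by auto
  have "sum_words ?n (\<lambda>xs. f (\<sigma> v, take k xs) * g (end_from (\<sigma> v) (take k xs), drop k xs)
                            * word_coeff M xs ys)
      = sum_words k (\<lambda>a. sum_words (?n - k) (\<lambda>b. f (\<sigma> v, take k (a @ b))
          * g (end_from (\<sigma> v) (take k (a @ b)), drop k (a @ b)) * word_coeff M (a @ b) ys))"
    by (subst n, subst sum_words_append) (rule refl)
  also have "\<dots> = sum_words k (\<lambda>a. sum_words (?n - k) (\<lambda>b.
      (f (\<sigma> v, a) * word_coeff M a ?ys1) * (g (\<sigma> (end_from v ?ys1), b) * word_coeff M b ?ys2)))"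
  proof (intro sum_words_cong)
    fix a b :: "arr list" assume a: "length a = k"
    have split: "word_coeff M (a @ b) ys = word_coeff M a ?ys1 * word_coeff M b ?ys2"
      using word_coeff_append[of a ?ys1 M b ?ys2] a len by simp
    show "f (\<sigma> v, take k (a @ b)) * g (end_from (\<sigma> v) (take k (a @ b)), drop k (a @ b))
            * word_coeff M (a @ b) ys
        = (f (\<sigma> v, a) * word_coeff M a ?ys1) * (g (\<sigma> (end_from v ?ys1), b) * word_coeff M b ?ys2)"
    proof (cases "word_coeff M a ?ys1 = 0")
      case False
      have "end_from (\<sigma> (\<sigma> v)) ?ys1 = \<sigma> (end_from (\<sigma> v) a)"
        using word_coeff_compatible[OF M False] by blast
      then have "\<sigma> (end_from v ?ys1) = end_from (\<sigma> v) a" by (metis \<sigma>)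
      then show ?thesis using a by (simp add: split mult_ac)
    qed (simp add: split)
  qed
  also have "\<dots> = arrow_subst \<sigma> M f (v, ?ys1) * arrow_subst \<sigma> M g (end_from v ?ys1, ?ys2)"
    unfolding arrow_subst_apply len by (simp add: sum_words_mult_left sum_words_mult_right)
  finally show ?thesis .
qed

lemma arrow_subst_mult:
  assumes M: "arrow_compatible \<sigma> M" and \<sigma>: "\<And>v. \<sigma> (\<sigma> v) = v"
    and f: "f \<in> pa_carrier" and g: "g \<in> pa_carrier"
  shows "arrow_subst \<sigma> M (pa_mult f g) = pa_mult (arrow_subst \<sigma> M f) (arrow_subst \<sigma> M g)"
proof (rule ext)
  fix p :: path
  obtain v ys where p: "p = (v, ys)" by (cases p)
  have "arrow_subst \<sigma> M (pa_mult f g) p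
      = sum_words (length ys) (\<lambda>xs. \<Sum>k\<le>length ys. f (\<sigma> v, take k xs)
          * g (end_from (\<sigma> v) (take k xs), drop k xs) * word_coeff M xs ys)"
    unfolding p arrow_subst_apply pa_mult_apply_carrier[OF f g] factor_sum_def
    by (rule sum_words_cong) (simp add: sum_distrib_right)
  also have "\<dots> = (\<Sum>k\<le>length ys. arrow_subst \<sigma> M f (v, take k ys)
                     * arrow_subst \<sigma> M g (end_from v (take k ys), drop k ys))"
    by (simp add: sum_words_sum arrow_subst_factor[OF M \<sigma>])
  also have "\<dots> = pa_mult (arrow_subst \<sigma> M f) (arrow_subst \<sigma> M g) p"
    by (simp add: p pa_mult_apply_carrier arrow_subst_closed M \<sigma> f g factor_sum_def)
  finally show "arrow_subst \<sigma> M (pa_mult f g) p = pa_mult (arrow_subst \<sigma> M f) (arrow_subst \<sigma> M g) p" .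
qed

lemma arrow_subst_ring_hom:
  assumes "arrow_compatible \<sigma> M" and "\<And>v. \<sigma> (\<sigma> v) = v"
  shows "arrow_subst \<sigma> M \<in> ring_hom PA PA"
  by (rule ring_hom_memI)
    (simp_all add: assms arrow_subst_closed arrow_subst_mult arrow_subst_add arrow_subst_pa_scal)

lemma arrow_subst_inverse:
  assumes \<sigma>: "\<And>v. \<sigma> (\<tau> v) = v"
    and MN: "\<And>x z. (\<Sum>y\<in>UNIV. M x y * N y z) = (if x = z then 1 else 0)"
  shows "arrow_subst \<tau> N (arrow_subst \<sigma> M f) = f"
proof (rule ext)
  fix p :: path
  obtain v zs where p: "p = (v, zs)" by (cases p)
  let ?n = "length zs"
  have "arrow_subst \<tau> N (arrow_subst \<sigma> M f) p
      = sum_words ?n (\<lambda>ys. sum_words ?n (\<lambda>xs. f (v, xs) * word_coeff M xs ys * word_coeff N ys zs))"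
    unfolding p arrow_subst_apply
    by (rule sum_words_cong) (simp add: arrow_subst_apply \<sigma> sum_words_mult_right[symmetric])
  also have "\<dots> = sum_words ?n (\<lambda>xs. f (v, xs) * sum_words ?n (\<lambda>ys. word_coeff M xs ys * word_coeff N ys zs))"
    by (subst sum_words_swap) (simp add: sum_words_mult_left[symmetric] mult.assoc)
  also have "\<dots> = sum_words ?n (\<lambda>xs. if xs = zs then f (v, zs) else 0)"
    by (rule sum_words_cong) (simp add: word_coeff_mult[OF MN] word_coeff_delta)
  also have "\<dots> = f p"
    by (simp add: sum_words_delta p)
  finally show "arrow_subst \<tau> N (arrow_subst \<sigma> M f) p = f p" .
qed

section \<open>The defining relations\<close>

lemma take_drop_eq_singletons: "(take k zs = [x] \<and> drop k zs = [y]) \<longleftrightarrow> (k = 1 \<and> zs = [x, y])"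
proof
  assume h: "take k zs = [x] \<and> drop k zs = [y]"
  then have zs: "zs = [x, y]" by (metis append_Cons append_Nil append_take_drop_id)
  with h have "k = 1" by (cases k) (auto simp: take_Cons' split: if_splits)
  with zs show "k = 1 \<and> zs = [x, y]" by simp
qed auto

lemma arw_mult:
  "pa_mult (arw x) (arw y :: path \<Rightarrow> 'k::field) = (\<lambda>p. if p = (src x, [x, y]) then (if tgt x = src y then 1 else 0) else 0)"
proof (rule ext)
  fix p :: path
  obtain v zs where p: "p = (v, zs)" by (cases p)
  let ?c = "if (v, zs) = (src x, [x, y]) \<and> tgt x = src y then 1 else 0 :: 'k"
  have "arw x (v, take k zs) * arw y (end_from v (take k zs), drop k zs) = (if k = 1 then ?c else 0)" for k
    using take_drop_eq_singletons[of k zs x y] by (auto simp: arw_def)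
  then have "factor_sum (arw x) (arw y) v zs = (\<Sum>k\<le>length zs. if k = 1 then ?c else 0)"
    unfolding factor_sum_def by simp
  also have "\<dots> = ?c" by auto
  finally show "pa_mult (arw x) (arw y) p
      = (if p = (src x, [x, y]) then (if tgt x = src y then 1 else 0) else (0 :: 'k))"
    by (auto simp: p pa_mult_apply_carrier arw_closed)
qed

definition rel1 :: "path \<Rightarrow> 'k::field" where
  "rel1 = (\<lambda>p. pa_mult (arw A) (arw B) p - pa_mult (pa_add (arw A) (arw C)) (arw D) p)"

definition rel2 :: "'k \<Rightarrow> path \<Rightarrow> 'k::field" where
  "rel2 c = (\<lambda>p. pa_mult (arw B) (arw A) p - c * pa_mult (arw D) (arw C) p)"

lemma rels_eq: "rels q = {rel1, rel2 q}"
  by (simp add: rels_def rel1_def rel2_def)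

lemma rel1_eq: "rel1 = (\<lambda>p. (if p = (V1, [A, B]) then 1 else 0)
                         - ((if p = (V1, [A, D]) then 1 else 0) + (if p = (V1, [C, D]) then 1 else 0)))"
  unfolding rel1_def pa_mult_add_left arw_mult by (simp add: pa_add_def)

lemma rel2_eq: "rel2 c = (\<lambda>p. (if p = (V2, [B, A]) then 1 else 0) - c * (if p = (V2, [D, C]) then 1 else 0))"
  by (simp add: rel2_def arw_mult)

lemma rels_carrier: "rels q \<subseteq> carrier PA"
proof -
  have "rel1 \<in> pa_carrier"
    unfolding rel1_def by (intro pa_diff_closed pa_mult_closed pa_add_closed arw_closed)
  moreover have "rel2 q \<in> pa_carrier"
    unfolding rel2_def
    by (intro pa_diff_closed pa_mult_closed arw_closed pa_smul_closed[unfolded pa_smul_def])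
  ultimately show ?thesis by (simp add: rels_eq)
qed

lemma pa_smul_rel_in_Dideal:
  fixes q c :: "'k::field"
  assumes r: "r \<in> rels q"
  shows "pa_smul c r \<in> Dideal q"
proof -
  interpret ring "PA :: (path \<Rightarrow> 'k) ring" by (rule ring_PA)
  have I: "ideal (Dideal q) PA" unfolding Dideal_def by (rule genideal_ideal[OF rels_carrier])
  have "r \<in> Dideal q" unfolding Dideal_def using genideal_self[OF rels_carrier] r by blast
  then have "pa_scal c \<otimes>\<^bsub>PA\<^esub> r \<in> Dideal q"
    by (rule ideal.I_l_closed[OF I]) (simp add: pa_scal_closed)
  moreover have "pa_scal c \<otimes>\<^bsub>PA\<^esub> r = pa_smul c r"
    using rels_carrier[of q] r by (simp add: pa_mult_scal_left subset_iff)
  ultimately show ?thesis by simp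
qed

lemma arrow_subst_rel1: "arrow_subst \<sigma> M rel1 = (\<lambda>p. if \<sigma> (fst p) = V1 \<and> length (snd p) = 2
     then word_coeff M [A, B] (snd p) - (word_coeff M [A, D] (snd p) + word_coeff M [C, D] (snd p)) else 0)"
  unfolding rel1_eq arrow_subst_diff arrow_subst_add[unfolded pa_add_def] arrow_subst_delta
  by (auto intro!: ext)

lemma arrow_subst_rel2: "arrow_subst \<sigma> M (rel2 c) = (\<lambda>p. if \<sigma> (fst p) = V2 \<and> length (snd p) = 2
     then word_coeff M [B, A] (snd p) - c * word_coeff M [D, C] (snd p) else 0)"
  unfolding rel2_eq arrow_subst_diff arrow_subst_scale arrow_subst_delta
  by (auto intro!: ext)

lemma path_fun_eq_len2I:
  fixes f g :: "path \<Rightarrow> 'k::zero"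
  assumes "\<forall>v y1 y2. f (v, [y1, y2]) = g (v, [y1, y2])"
    and "\<forall>v ys. length ys \<noteq> 2 \<longrightarrow> f (v, ys) = 0 \<and> g (v, ys) = 0"
  shows "f = g"
proof (rule ext)
  fix p :: path
  obtain v ys where p: "p = (v, ys)" by (cases p)
  show "f p = g p"
  proof (cases "length ys = 2")
    case True
    then obtain y1 y2 where "ys = [y1, y2]"
      by (auto simp: numeral_2_eq_2 length_Suc_conv)
    then show ?thesis using assms(1) p by simp
  qed (use assms(2) p in simp)
qed

lemma arrow_subst_Dalg_iso:
  fixes M N :: "arr \<Rightarrow> arr \<Rightarrow> 'k::field"
  assumes \<sigma>: "\<And>v. \<sigma> (\<sigma> v) = v"
    and M: "arrow_compatible \<sigma> M" and N: "arrow_compatible \<sigma> N"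
    and MN: "\<And>x z. (\<Sum>y\<in>UNIV. M x y * N y z) = (if x = z then 1 else 0)"
    and NM: "\<And>x z. (\<Sum>y\<in>UNIV. N x y * M y z) = (if x = z then 1 else 0)"
    and rels_M: "\<And>r. r \<in> rels q \<Longrightarrow> arrow_subst \<sigma> M r \<in> Dideal q'"
    and rels_N: "\<And>r. r \<in> rels q' \<Longrightarrow> arrow_subst \<sigma> N r \<in> Dideal q"
  shows "\<exists>h. h \<in> ring_iso (Dalg q) (Dalg q')
             \<and> (\<forall>f\<in>pa_carrier. h (cls q f) = cls q' (arrow_subst \<sigma> M f))"
proof -
  have "\<exists>h. h \<in> ring_iso (PA Quot genideal PA (rels q)) (PA Quot genideal PA (rels q'))
          \<and> (\<forall>f\<in>carrier PA. h (genideal PA (rels q) +>\<^bsub>PA\<^esub> f)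
                              = genideal PA (rels q') +>\<^bsub>PA\<^esub> arrow_subst \<sigma> M f)"
    by (rule genideal_Quot_iso[OF ring_PA rels_carrier rels_carrier
          arrow_subst_ring_hom[OF M \<sigma>] arrow_subst_ring_hom[OF N \<sigma>]])
      (simp_all add: arrow_subst_inverse[of \<sigma> \<sigma>, OF \<sigma> MN] arrow_subst_inverse[of \<sigma> \<sigma>, OF \<sigma> NM]
        rels_M[unfolded Dideal_def] rels_N[unfolded Dideal_def])
  then show ?thesis
    unfolding Dalg_def Dideal_def cls_def by simp
qed

fun phi_mat :: "'k::field \<Rightarrow> arr \<Rightarrow> arr \<Rightarrow> 'k" where
  "phi_mat q A A = q" | "phi_mat q A C = q - 1" | "phi_mat q B B = q" | "phi_mat q C C = 1"
| "phi_mat q D B = q - 1" | "phi_mat q D D = 1" | "phi_mat q _ _ = 0"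

fun phi_inv_mat :: "'k::field \<Rightarrow> arr \<Rightarrow> arr \<Rightarrow> 'k" where
  "phi_inv_mat q A A = 1 / q" | "phi_inv_mat q A C = - (q - 1) / q" | "phi_inv_mat q B B = 1 / q"
| "phi_inv_mat q C C = 1" | "phi_inv_mat q D B = - (q - 1) / q" | "phi_inv_mat q D D = 1"
| "phi_inv_mat q _ _ = 0"

fun psi_mat :: "'k::field \<Rightarrow> arr \<Rightarrow> arr \<Rightarrow> 'k" where
  "psi_mat q A D = q" | "psi_mat q B A = 1" | "psi_mat q B C = 1" | "psi_mat q C B = 1"
| "psi_mat q D A = 1" | "psi_mat q _ _ = 0"

fun psi_inv_mat :: "'k::field \<Rightarrow> arr \<Rightarrow> arr \<Rightarrow> 'k" where
  "psi_inv_mat q A D = 1" | "psi_inv_mat q B C = 1" | "psi_inv_mat q C B = 1"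
| "psi_inv_mat q C D = -1" | "psi_inv_mat q D A = 1 / q" | "psi_inv_mat q _ _ = 0"

fun swap_vert :: "vert \<Rightarrow> vert" where
  "swap_vert V1 = V2" | "swap_vert V2 = V1"

lemma swap_vert_swap_vert [simp]: "swap_vert (swap_vert v) = v"
  by (cases v) auto

lemma arrow_compatible_phi_psi:
  "arrow_compatible id (phi_mat q)" "arrow_compatible id (phi_inv_mat q)"
  "arrow_compatible swap_vert (psi_mat q)" "arrow_compatible swap_vert (psi_inv_mat q)"
  by (simp_all add: arrow_compatible_def all_arr)

lemma phi_psi_mat_inverse:
  assumes "q \<noteq> 0"
  shows "(\<Sum>y\<in>UNIV. phi_mat q x y * phi_inv_mat q y z) = (if x = z then 1 else 0)"
    and "(\<Sum>y\<in>UNIV. phi_inv_mat q x y * phi_mat q y z) = (if x = z then 1 else 0)"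
    and "(\<Sum>y\<in>UNIV. psi_mat q x y * psi_inv_mat q y z) = (if x = z then 1 else 0)"
    and "(\<Sum>y\<in>UNIV. psi_inv_mat q x y * psi_mat q y z) = (if x = z then 1 else 0)"
  using assms by (cases x; cases z; simp add: UNIV_arr field_simps)+

lemma phi_rels:
  assumes "q \<noteq> 0"
  shows "arrow_subst id (phi_mat q) rel1 = pa_smul q rel1"
    and "arrow_subst id (phi_mat q) (rel2 q) = pa_smul (q * q) (rel2 (inverse q))"
    and "arrow_subst id (phi_inv_mat q) rel1 = pa_smul (inverse q) rel1"
    and "arrow_subst id (phi_inv_mat q) (rel2 (inverse q)) = pa_smul (inverse q * inverse q) (rel2 q)"
  using assms
  by - (rule path_fun_eq_len2I; simp only: arrow_subst_rel1 arrow_subst_rel2;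
      simp add: rel1_eq rel2_eq pa_smul_def all_vert all_arr field_simps)+

lemma psi_rels:
  assumes "q \<noteq> 0"
  shows "arrow_subst swap_vert (psi_mat q) rel1 = pa_smul (-1) (rel2 q)"
    and "arrow_subst swap_vert (psi_mat q) (rel2 q) = pa_smul (- q) rel1"
    and "arrow_subst swap_vert (psi_inv_mat q) rel1 = pa_smul (- inverse q) (rel2 q)"
    and "arrow_subst swap_vert (psi_inv_mat q) (rel2 q) = pa_smul (-1) rel1"
  using assms
  by - (rule path_fun_eq_len2I; simp only: arrow_subst_rel1 arrow_subst_rel2;
      simp add: rel1_eq rel2_eq pa_smul_def all_vert all_arr field_simps)+

lemma phi_arw:
  "arrow_subst id (phi_mat q) (arw A) = pa_add (pa_smul q (arw A)) (pa_smul (q - 1) (arw C))"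
  "arrow_subst id (phi_mat q) (arw B) = pa_smul q (arw B)"
  "arrow_subst id (phi_mat q) (arw C) = arw C"
  "arrow_subst id (phi_mat q) (arw D) = pa_add (pa_smul (q - 1) (arw B)) (arw D)"
  by (simp_all add: arrow_subst_arw arrow_compatible_phi_psi UNIV_arr pa_add_def pa_smul_def)

lemma psi_arw:
  "arrow_subst swap_vert (psi_mat q) (arw A) = pa_smul q (arw D)"
  "arrow_subst swap_vert (psi_mat q) (arw B) = pa_add (arw A) (arw C)"
  "arrow_subst swap_vert (psi_mat q) (arw C) = arw B"
  "arrow_subst swap_vert (psi_mat q) (arw D) = arw A"
  by (simp_all add: arrow_subst_arw arrow_compatible_phi_psi UNIV_arr pa_add_def pa_smul_def)

lemma phi_Dalg_iso:
  assumes "q \<noteq> 0"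
  shows "\<exists>\<phi>. \<phi> \<in> ring_iso (Dalg q) (Dalg (inverse q))
             \<and> (\<forall>f\<in>pa_carrier. \<phi> (cls q f) = cls (inverse q) (arrow_subst id (phi_mat q) f))"
  by (rule arrow_subst_Dalg_iso[where N = "phi_inv_mat q"])
    (use phi_rels[OF assms] in \<open>auto simp: arrow_compatible_phi_psi phi_psi_mat_inverse[OF assms]
       rels_eq intro!: pa_smul_rel_in_Dideal\<close>)

lemma psi_Dalg_iso:
  assumes "q \<noteq> 0"
  shows "\<exists>\<psi>. \<psi> \<in> ring_iso (Dalg q) (Dalg q)
             \<and> (\<forall>f\<in>pa_carrier. \<psi> (cls q f) = cls q (arrow_subst swap_vert (psi_mat q) f))"
  by (rule arrow_subst_Dalg_iso[where N = "psi_inv_mat q"])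
    (use psi_rels[OF assms] in \<open>auto simp: arrow_compatible_phi_psi phi_psi_mat_inverse[OF assms]
       rels_eq intro!: pa_smul_rel_in_Dideal\<close>)

theorem lemma3p8:
  fixes q :: "'k::field_char_0"
  assumes "alg_closed_field TYPE('k)"
    and "q \<noteq> 0"
  shows "(\<exists>\<phi>. \<phi> \<in> ring_iso (Dalg q) (Dalg (inverse q))
            \<and> (\<forall>l. \<phi> (cls q (pa_scal l)) = cls (inverse q) (pa_scal l))
            \<and> \<phi> (cls q (vtx V1)) = cls (inverse q) (vtx V1)
            \<and> \<phi> (cls q (vtx V2)) = cls (inverse q) (vtx V2)
            \<and> \<phi> (cls q (arw A)) = cls (inverse q) (pa_add (pa_smul q (arw A)) (pa_smul (q - 1) (arw C)))
            \<and> \<phi> (cls q (arw B)) = cls (inverse q) (pa_smul q (arw B))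
            \<and> \<phi> (cls q (arw C)) = cls (inverse q) (arw C)
            \<and> \<phi> (cls q (arw D)) = cls (inverse q) (pa_add (pa_smul (q - 1) (arw B)) (arw D)))
       \<and> (\<exists>\<psi>. \<psi> \<in> ring_iso (Dalg q) (Dalg q)
            \<and> (\<forall>l. \<psi> (cls q (pa_scal l)) = cls q (pa_scal l))
            \<and> \<psi> (cls q (vtx V1)) = cls q (vtx V2)
            \<and> \<psi> (cls q (vtx V2)) = cls q (vtx V1)
            \<and> \<psi> (cls q (arw A)) = cls q (pa_smul q (arw D))
            \<and> \<psi> (cls q (arw B)) = cls q (pa_add (arw A) (arw C))
            \<and> \<psi> (cls q (arw C)) = cls q (arw B)
            \<and> \<psi> (cls q (arw D)) = cls q (arw A))"
proof -
  obtain \<phi> where \<phi>: "\<phi> \<in> ring_iso (Dalg q) (Dalg (inverse q))"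
    and \<phi>_cls: "\<And>f. f \<in> pa_carrier \<Longrightarrow> \<phi> (cls q f) = cls (inverse q) (arrow_subst id (phi_mat q) f)"
    using phi_Dalg_iso[OF assms(2)] by blast
  obtain \<psi> where \<psi>: "\<psi> \<in> ring_iso (Dalg q) (Dalg q)"
    and \<psi>_cls: "\<And>f. f \<in> pa_carrier \<Longrightarrow> \<psi> (cls q f) = cls q (arrow_subst swap_vert (psi_mat q) f)"
    using psi_Dalg_iso[OF assms(2)] by blast
  show ?thesis
    by (rule conjI[OF exI[of _ \<phi>] exI[of _ \<psi>]])
      (simp_all add: \<phi> \<psi> \<phi>_cls \<psi>_cls pa_scal_closed vtx_closed arw_closed
        arrow_subst_pa_scal arrow_subst_vtx phi_arw psi_arw)
qed

end
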